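(* With the notation of the context, let $\varepsilon>0$. For every $z\in U$ with $\mathrm{dist}(z,\Lambda_\varepsilon)>(2n/\lambda)^{1/2}\,\mathfrak r(\varepsilon)$ and every $r>0$ with $B_r(z)\Subset U$, \[\sup_{B_r(z)}w_\varepsilon\ge\frac{\lambda}{2n}r^2-\mathfrak r(\varepsilon)^2.\]
   Context: Let $U\subset\mathbb{R}^n$ be a smooth bounded domain, and let $\varphi_0\in C^2(U)\cap C(\overline U)$ be positive somewhere in $U$, negative on $\partial U$, and satisfy $\lambda\le-\Delta\varphi_0\le\lambda^{-1}$ in $U$ for some $\lambda\in(0,1]$. Let $\psi:\mathbb{R}^n\to\mathbb{R}$ be a smooth $\mathbb{Z}^n$-periodic function with $-1\le\psi\le0$, and let $p\in\mathbb{R}$. For $\varepsilon>0$ set $\varphi_\varepsilon(x)=\varphi_0(x)+\varepsilon^p\psi(x/\varepsilon)$ and let $u_\varepsilon$ be the least function $v$ with $\Delta v\le 0$ in $U$, $v\ge\varphi_\varepsilon$ in $U$, $v\ge0$ on $\partial U$. Set $w_\varepsilon=u_\varepsilon-\varphi_0$ and $\Lambda_\varepsilon=\{u_\varepsilon=\varphi_\varepsilon\}\cap U$. For $\mu>0$, let $\chi_\mu$ be the least $\mathbb{Z}^n$-periodic function $v$ on $\mathbb{R}^n$ with $\Delta v\le\mu$ in $\mathbb{R}^n$ and $v\ge\psi$ in $\mathbb{R}^n$, and $\mathcal E(\mu)=-\inf\chi_\mu$. Define $\mathfrak r(\varepsilon)=\big(\varepsilon^p\,\mathcal E(\lambda^{-1}\varepsilon^{2-p})\big)^{1/2}$.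 *)

theory Defs
  imports "HOL-Analysis.Analysis"
begin

fun iter_partial :: "'a::euclidean_space list \<Rightarrow> ('a \<Rightarrow> real) \<Rightarrow> 'a \<Rightarrow> real" where
  "iter_partial [] f = f"
| "iter_partial (b # bs) f = (\<lambda>x. frechet_derivative (iter_partial bs f) (at x) b)"

definition laplacian :: "('a::euclidean_space \<Rightarrow> real) \<Rightarrow> 'a \<Rightarrow> real" where
  "laplacian f x = (\<Sum>b\<in>Basis. iter_partial [b, b] f x)"

definition C2_on :: "'a::euclidean_space set \<Rightarrow> ('a \<Rightarrow> real) \<Rightarrow> bool" where
  "C2_on S f \<longleftrightarrow>
     (\<forall>x\<in>S. f differentiable (at x)) \<and>
     (\<forall>b\<in>Basis. \<forall>x\<in>S. iter_partial [b] f differentiable (at x)) \<and>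
     (\<forall>b\<in>Basis. \<forall>c\<in>Basis. continuous_on S (iter_partial [c, b] f))"

definition smooth :: "('a::euclidean_space \<Rightarrow> real) \<Rightarrow> bool" where
  "smooth f \<longleftrightarrow> (\<forall>bs. set bs \<subseteq> Basis \<longrightarrow> (\<forall>x. iter_partial bs f differentiable (at x)))"

definition smooth_bounded_domain :: "'a::euclidean_space set \<Rightarrow> bool" where
  "smooth_bounded_domain U \<longleftrightarrow>
     open U \<and> connected U \<and> bounded U \<and> U \<noteq> {} \<and>
     (\<forall>p\<in>frontier U. \<exists>r>0. \<exists>\<rho>. smooth \<rho> \<and>
        (\<forall>x\<in>ball p r. (\<exists>b\<in>Basis. frechet_derivative \<rho> (at x) b \<noteq> 0)) \<and>
        U \<inter> ball p r = {x\<in>ball p r. \<rho> x < 0})"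

definition lattice_periodic :: "('a::euclidean_space \<Rightarrow> real) \<Rightarrow> bool" where
  "lattice_periodic v \<longleftrightarrow>
     (\<forall>x k. (\<forall>b\<in>Basis. k \<bullet> b \<in> \<int>) \<longrightarrow> v (x + k) = v x)"

(* "\<Delta>v \<le> \<mu> in S" in the viscosity sense (v continuous): for every C^2 function
   touching v from below at x \<in> S, its Laplacian at x is \<le> \<mu> *)
definition visc_lap_le :: "'a::euclidean_space set \<Rightarrow> real \<Rightarrow> ('a \<Rightarrow> real) \<Rightarrow> bool" where
  "visc_lap_le S \<mu> v \<longleftrightarrow>
     (\<forall>x\<in>S. \<forall>\<phi> e. e > 0 \<longrightarrow> C2_on (ball x e) \<phi> \<longrightarrow> \<phi> x = v x \<longrightarrow>
        (\<forall>y\<in>ball x e. \<phi> y \<le> v y) \<longrightarrow> laplacian \<phi> x \<le> \<mu>)"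

definition obst_admissible :: "'a::euclidean_space set \<Rightarrow> ('a \<Rightarrow> real) \<Rightarrow> ('a \<Rightarrow> real) \<Rightarrow> bool" where
  "obst_admissible U obst v \<longleftrightarrow>
     continuous_on (closure U) v \<and> visc_lap_le U 0 v \<and>
     (\<forall>x\<in>U. v x \<ge> obst x) \<and> (\<forall>x\<in>frontier U. v x \<ge> 0)"

definition is_least_obst_sol :: "'a::euclidean_space set \<Rightarrow> ('a \<Rightarrow> real) \<Rightarrow> ('a \<Rightarrow> real) \<Rightarrow> bool" where
  "is_least_obst_sol U obst u \<longleftrightarrow>
     obst_admissible U obst u \<and>
     (\<forall>v. obst_admissible U obst v \<longrightarrow> (\<forall>x\<in>closure U. u x \<le> v x))"

definition cell_admissible :: "real \<Rightarrow> ('a::euclidean_space \<Rightarrow> real) \<Rightarrow> ('a \<Rightarrow> real) \<Rightarrow> bool" where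
  "cell_admissible \<mu> \<psi> v \<longleftrightarrow>
     continuous_on UNIV v \<and> lattice_periodic v \<and> visc_lap_le UNIV \<mu> v \<and> (\<forall>x. v x \<ge> \<psi> x)"

definition is_least_cell_sol :: "real \<Rightarrow> ('a::euclidean_space \<Rightarrow> real) \<Rightarrow> ('a \<Rightarrow> real) \<Rightarrow> bool" where
  "is_least_cell_sol \<mu> \<psi> chi \<longleftrightarrow>
     cell_admissible \<mu> \<psi> chi \<and> (\<forall>v. cell_admissible \<mu> \<psi> v \<longrightarrow> (\<forall>x. chi x \<le> v x))"

end

theory Submission
  imports Defs
begin

text \<open>
  Write \<open>w = u - \<phi>\<^sub>0\<close>. In the fast variable \<open>y = x / \<epsilon>\<close>, the function \<open>min \<chi> (w(\<epsilon> y) / \<epsilon>\<^sup>p)\<close> is a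
  supersolution of the cell problem that agrees with \<open>\<chi>\<close> outside the bounded set \<open>U / \<epsilon>\<close>. Its
  infimum over lattice translates is therefore admissible for the cell problem and lies above \<open>\<chi>\<close>,
  which gives the global lower bound \<open>w \<ge> \<epsilon>\<^sup>p inf \<chi>\<close>.

  If \<open>sup w\<close> over \<open>B\<^sub>r(z)\<close> were smaller than \<open>\<lambda> r\<^sup>2 / 2n + \<epsilon>\<^sup>p inf \<chi>\<close>, then for \<open>a\<close> slightly below
  \<open>\<lambda> / 2n\<close> the function \<open>w - a |x - z|\<^sup>2\<close> would attain its maximum over the closed ball at an
  interior point off the contact set, the distance hypothesis excluding contact points. There
  \<open>\<phi>\<^sub>0 + a |x - z|\<^sup>2 + const\<close> is strictly superharmonic and touches \<open>u\<close> from above; lowering it by a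
  small paraboloid yields an admissible competitor that lies below \<open>u\<close> at that point, contradicting
  the minimality of \<open>u\<close>.
\<close>

section \<open>Second derivatives and the Laplacian\<close>

lemma iter_partial_single:
  "(f has_derivative D) (at x) \<Longrightarrow> iter_partial [b] f x = D b"
  by (simp add: frechet_derivative_at[symmetric])

lemma has_derivative_iter_partial:
  "iter_partial bs f differentiable at x \<Longrightarrow>
     (iter_partial bs f has_derivative (\<lambda>c. iter_partial (c # bs) f x)) (at x)"
  by (simp add: frechet_derivative_works[symmetric])

lemma has_derivative_affine_comp:
  fixes F :: "'a::euclidean_space \<Rightarrow> real"
  assumes "(F has_derivative D) (at (\<beta> *\<^sub>R x + t))"
  shows "((\<lambda>x. \<alpha> * F (\<beta> *\<^sub>R x + t)) has_derivative (\<lambda>h. \<alpha> * \<beta> * D h)) (at x)"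
proof -
  have "((\<lambda>x. \<beta> *\<^sub>R x + t) has_derivative (\<lambda>h. \<beta> *\<^sub>R h)) (at x)"
    by (auto intro!: derivative_eq_intros)
  from has_derivative_compose[OF this assms]
  have "((\<lambda>x. \<alpha> * F (\<beta> *\<^sub>R x + t)) has_derivative (\<lambda>h. \<alpha> * D (\<beta> *\<^sub>R h))) (at x)"
    by (rule has_derivative_mult_right)
  then show ?thesis
    using linear_scale[OF has_derivative_linear[OF assms]] by (simp add: mult.assoc)
qed

lemma
  fixes f :: "'a::euclidean_space \<Rightarrow> real"
  assumes S: "open S"
    and f: "\<And>y. y \<in> S \<Longrightarrow> f differentiable at y"
    and first: "\<And>b y. b \<in> Basis \<Longrightarrow> y \<in> S \<Longrightarrow> iter_partial [b] f y = h b y"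
    and second: "\<And>b y. b \<in> Basis \<Longrightarrow> y \<in> S \<Longrightarrow> (h b has_derivative H b y) (at y)"
    and cont: "\<And>b c. b \<in> Basis \<Longrightarrow> c \<in> Basis \<Longrightarrow> continuous_on S (\<lambda>y. H b y c)"
  shows C2_onI: "C2_on S f"
    and iter_partial_pair_eq: "\<And>b c y. b \<in> Basis \<Longrightarrow> y \<in> S \<Longrightarrow> iter_partial [c, b] f y = H b y c"
proof -
  have partial: "(iter_partial [b] f has_derivative H b y) (at y)" if "b \<in> Basis" "y \<in> S" for b y
    using has_derivative_transform_within_open[OF second[OF that] S that(2)] first[OF that(1)]
    by metis
  show pair: "iter_partial [c, b] f y = H b y c" if "b \<in> Basis" "y \<in> S" for b c y
    using iter_partial_single[OF partial[OF that]] by simp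
  have "continuous_on S (iter_partial [c, b] f)" if "b \<in> Basis" "c \<in> Basis" for b c
    using cont[OF that] by (rule continuous_on_eq) (simp only: pair[OF that(1)])
  with f partial show "C2_on S f"
    unfolding C2_on_def differentiable_def by blast
qed

lemma C2_on_differentiable:
  "C2_on S f \<Longrightarrow> y \<in> S \<Longrightarrow> (f has_derivative (\<lambda>b. iter_partial [b] f y)) (at y)"
  and C2_on_partial_differentiable:
  "C2_on S f \<Longrightarrow> b \<in> Basis \<Longrightarrow> y \<in> S \<Longrightarrow>
     (iter_partial [b] f has_derivative (\<lambda>c. iter_partial [c, b] f y)) (at y)"
  unfolding C2_on_def using has_derivative_iter_partial[of "[]" f y] has_derivative_iter_partial[of "[b]" f y]
  by auto

lemma C2_on_subset: "C2_on S f \<Longrightarrow> T \<subseteq> S \<Longrightarrow> C2_on T f"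
  unfolding C2_on_def by (meson continuous_on_subset subsetD)

lemma C2_on_imp_continuous_on: "C2_on S f \<Longrightarrow> continuous_on S f"
  unfolding C2_on_def
  by (meson continuous_at_imp_continuous_on differentiable_imp_continuous_within)

lemma
  fixes f g :: "'a::euclidean_space \<Rightarrow> real"
  assumes S: "open S" and f: "C2_on S f" and g: "C2_on S g"
  shows C2_on_add: "C2_on S (\<lambda>x. f x + g x)"
    and laplacian_add: "x \<in> S \<Longrightarrow> laplacian (\<lambda>x. f x + g x) x = laplacian f x + laplacian g x"
proof -
  let ?h = "\<lambda>b y. iter_partial [b] f y + iter_partial [b] g y"
  let ?H = "\<lambda>b y c. iter_partial [c, b] f y + iter_partial [c, b] g y"
  have deriv: "((\<lambda>x. f x + g x) has_derivative (\<lambda>b. ?h b y)) (at y)" if "y \<in> S" for y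
    using C2_on_differentiable[OF f that] C2_on_differentiable[OF g that] by (rule has_derivative_add)
  have partial_deriv: "(?h b has_derivative ?H b y) (at y)" if "b \<in> Basis" "y \<in> S" for b y
    using C2_on_partial_differentiable[OF f that] C2_on_partial_differentiable[OF g that]
    by (rule has_derivative_add)
  have second_cont: "continuous_on S (\<lambda>y. ?H b y c)" if "b \<in> Basis" "c \<in> Basis" for b c
    using f g that unfolding C2_on_def by (intro continuous_on_add) auto
  have first_partial: "iter_partial [b] (\<lambda>x. f x + g x) y = ?h b y" if "b \<in> Basis" "y \<in> S" for b y
    using iter_partial_single[OF deriv[OF that(2)]] .
  have differentiable: "(\<lambda>x. f x + g x) differentiable at y" if "y \<in> S" for y
    using deriv[OF that] unfolding differentiable_def by blast
  show "C2_on S (\<lambda>x. f x + g x)"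
    by (rule C2_onI[OF S differentiable first_partial partial_deriv second_cont])
  show "x \<in> S \<Longrightarrow> laplacian (\<lambda>x. f x + g x) x = laplacian f x + laplacian g x"
    unfolding laplacian_def sum.distrib[symmetric]
    by (intro sum.cong refl iter_partial_pair_eq[OF S differentiable first_partial partial_deriv second_cont])
qed

lemma
  fixes f :: "'a::euclidean_space \<Rightarrow> real"
  assumes S: "open S" and f: "C2_on S f"
  shows C2_on_affine_comp: "C2_on {x. \<beta> *\<^sub>R x + t \<in> S} (\<lambda>x. \<alpha> * f (\<beta> *\<^sub>R x + t))"
    and laplacian_affine_comp: "\<beta> *\<^sub>R x + t \<in> S \<Longrightarrow>
      laplacian (\<lambda>x. \<alpha> * f (\<beta> *\<^sub>R x + t)) x = \<alpha> * \<beta>\<^sup>2 * laplacian f (\<beta> *\<^sub>R x + t)"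
proof -
  let ?T = "{x. \<beta> *\<^sub>R x + t \<in> S}"
  let ?h = "\<lambda>b y. \<alpha> * \<beta> * iter_partial [b] f (\<beta> *\<^sub>R y + t)"
  let ?H = "\<lambda>b y c. \<alpha> * \<beta> * \<beta> * iter_partial [c, b] f (\<beta> *\<^sub>R y + t)"
  have T: "open ?T"
    using continuous_open_vimage[OF S, of "\<lambda>x. \<beta> *\<^sub>R x + t"] by (simp add: vimage_def)
  have deriv: "((\<lambda>x. \<alpha> * f (\<beta> *\<^sub>R x + t)) has_derivative (\<lambda>b. ?h b y)) (at y)" if "y \<in> ?T" for y
    using has_derivative_affine_comp[OF C2_on_differentiable[OF f]] that by simp
  have partial_deriv: "(?h b has_derivative ?H b y) (at y)" if "b \<in> Basis" "y \<in> ?T" for b y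
    using has_derivative_affine_comp[OF C2_on_partial_differentiable[OF f], of b \<beta> y t "\<alpha> * \<beta>"] that
    by simp
  have second_cont: "continuous_on ?T (\<lambda>y. ?H b y c)" if "b \<in> Basis" "c \<in> Basis" for b c
  proof -
    have "continuous_on S (iter_partial [c, b] f)"
      using f that unfolding C2_on_def by blast
    then have "continuous_on ?T (\<lambda>y. iter_partial [c, b] f (\<beta> *\<^sub>R y + t))"
      by (rule continuous_on_compose2) (auto intro!: continuous_intros)
    then show ?thesis
      by (rule continuous_on_mult_left)
  qed
  have first_partial: "iter_partial [b] (\<lambda>x. \<alpha> * f (\<beta> *\<^sub>R x + t)) y = ?h b y" if "b \<in> Basis" "y \<in> ?T" for b y
    using iter_partial_single[OF deriv[OF that(2)]] .
  have differentiable: "(\<lambda>x. \<alpha> * f (\<beta> *\<^sub>R x + t)) differentiable at y" if "y \<in> ?T" for y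
    using deriv[OF that] unfolding differentiable_def by blast
  show "C2_on ?T (\<lambda>x. \<alpha> * f (\<beta> *\<^sub>R x + t))"
    by (rule C2_onI[OF T differentiable first_partial partial_deriv second_cont])
  assume "\<beta> *\<^sub>R x + t \<in> S"
  then show "laplacian (\<lambda>x. \<alpha> * f (\<beta> *\<^sub>R x + t)) x = \<alpha> * \<beta>\<^sup>2 * laplacian f (\<beta> *\<^sub>R x + t)"
    unfolding laplacian_def sum_distrib_left
    using iter_partial_pair_eq[OF T differentiable first_partial partial_deriv second_cont] by (intro sum.cong refl) (simp add: power2_eq_square)
qed

lemma
  fixes f :: "'a::euclidean_space \<Rightarrow> real"
  assumes f: "C2_on (ball y e) f"
  shows C2_on_ball_translate: "C2_on (ball (y + k) e) (\<lambda>x. f (x - k))"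
    and laplacian_ball_translate: "e > 0 \<Longrightarrow> laplacian (\<lambda>x. f (x - k)) (y + k) = laplacian f y"
proof -
  have ball: "{x. 1 *\<^sub>R x + - k \<in> ball y e} = ball (y + k) e"
    by (auto simp: dist_norm algebra_simps)
  show "C2_on (ball (y + k) e) (\<lambda>x. f (x - k))"
    using C2_on_affine_comp[OF open_ball f, of 1 "- k" 1] unfolding ball by simp
  show "e > 0 \<Longrightarrow> laplacian (\<lambda>x. f (x - k)) (y + k) = laplacian f y"
    using laplacian_affine_comp[OF open_ball f, of 1 "y + k" "- k" 1] by simp
qed

lemma C2_on_const: "C2_on S (\<lambda>x. K)"
  and laplacian_const: "laplacian (\<lambda>x. K) x = 0"
  unfolding C2_on_def laplacian_def by simp_all

lemma
  fixes z :: "'a::euclidean_space"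
  shows C2_on_quadratic: "C2_on S (\<lambda>x. a * ((x - z) \<bullet> (x - z)) + d)"
    and laplacian_quadratic: "laplacian (\<lambda>x. a * ((x - z) \<bullet> (x - z)) + d) x = 2 * a * real DIM('a)"
proof -
  let ?q = "\<lambda>x. a * ((x - z) \<bullet> (x - z)) + d"
  have deriv: "(?q has_derivative (\<lambda>b. 2 * a * ((y - z) \<bullet> b))) (at y)" for y
  proof -
    have "(?q has_derivative (\<lambda>b. a * (b \<bullet> (y - z) + (y - z) \<bullet> b))) (at y)"
      by (auto intro!: derivative_eq_intros)
    then show ?thesis by (simp add: inner_commute algebra_simps)
  qed
  have partial_deriv: "((\<lambda>y. 2 * a * ((y - z) \<bullet> b)) has_derivative (\<lambda>c. 2 * a * (c \<bullet> b))) (at y)" for b y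
    by (auto intro!: derivative_eq_intros)
  have first_partial: "iter_partial [b] ?q y = 2 * a * ((y - z) \<bullet> b)" for b y
    using iter_partial_single[OF deriv] .
  have differentiable: "?q differentiable at y" for y
    using deriv unfolding differentiable_def by blast
  note facts = open_UNIV differentiable first_partial partial_deriv continuous_on_const
  show "C2_on S ?q"
    using C2_onI[OF facts] by (rule C2_on_subset) simp
  show "laplacian ?q x = 2 * a * real DIM('a)"
    unfolding laplacian_def using iter_partial_pair_eq[OF facts] by simp
qed

text \<open>If \<open>H = G - F \<ge> 0\<close> vanishes at \<open>0\<close> then \<open>H'(0) = 0\<close>; were \<open>H''(0) < 0\<close>, \<open>H'\<close> would be
  negative just right of \<open>0\<close> and the mean value theorem would make \<open>H\<close> negative there.\<close>

lemma DERIV2_le_of_touching_below: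
  fixes F G F' G' :: "real \<Rightarrow> real"
  assumes e: "e > 0"
    and dF: "\<And>t. \<bar>t\<bar> < e \<Longrightarrow> (F has_real_derivative F' t) (at t)"
    and dG: "\<And>t. \<bar>t\<bar> < e \<Longrightarrow> (G has_real_derivative G' t) (at t)"
    and dF': "(F' has_real_derivative F'') (at 0)"
    and dG': "(G' has_real_derivative G'') (at 0)"
    and le: "\<And>t. \<bar>t\<bar> < e \<Longrightarrow> F t \<le> G t" and eq: "F 0 = G 0"
  shows "F'' \<le> G''"
proof (rule ccontr)
  assume "\<not> F'' \<le> G''"
  define H where "H t = G t - F t" for t
  define H' where "H' t = G' t - F' t" for t
  have dH: "(H has_real_derivative H' t) (at t)" if "\<bar>t\<bar> < e" for t
    unfolding H_def[abs_def] H'_def using dF[OF that] dG[OF that] by (auto intro!: derivative_eq_intros)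
  have H0: "H 0 = 0" and Hge: "\<And>t. \<bar>t\<bar> < e \<Longrightarrow> H t \<ge> 0"
    using eq le unfolding H_def by fastforce+
  have H'0: "H' 0 = 0"
    by (rule DERIV_local_min[OF dH[of 0] e]) (use e H0 Hge in auto)
  have "(H' has_real_derivative (G'' - F'')) (at 0)"
    unfolding H'_def[abs_def] using dF' dG' by (auto intro!: derivative_eq_intros)
  then obtain d where d: "d > 0" "\<And>h. h > 0 \<Longrightarrow> h < d \<Longrightarrow> H' h < 0"
    using DERIV_neg_dec_right[of H' "G'' - F''" 0] \<open>\<not> F'' \<le> G''\<close> H'0 by force
  define h where "h = min d e / 2"
  have h: "h > 0" "h < d" "h < e" using d e unfolding h_def by auto
  obtain t where t: "0 < t" "t < h" "H h - H 0 = h * H' t"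
    using MVT2[OF h(1), of H H'] dH h by force
  have "H h < 0" using d(2)[of t] t h H0 by (simp add: mult_pos_neg)
  with Hge[of h] h show False by simp
qed

lemma has_real_derivative_along_line:
  fixes f :: "'a::euclidean_space \<Rightarrow> real"
  assumes "(f has_derivative D) (at (x + t *\<^sub>R b))"
  shows "((\<lambda>s. f (x + s *\<^sub>R b)) has_real_derivative D b) (at t)"
proof -
  have "((\<lambda>s. x + s *\<^sub>R b) has_derivative (\<lambda>s. s *\<^sub>R b)) (at t)"
    by (auto intro!: derivative_eq_intros)
  from has_derivative_compose[OF this assms]
  have "((\<lambda>s. f (x + s *\<^sub>R b)) has_derivative (\<lambda>s. s * D b)) (at t)"
    using linear_scale[OF has_derivative_linear[OF assms]] by simp
  moreover have "(\<lambda>s. s * D b) = (*) (D b)"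
    by (auto simp: mult.commute)
  ultimately show ?thesis
    by (simp add: has_field_derivative_def)
qed

lemma second_partial_le_of_touching_below:
  fixes f g :: "'a::euclidean_space \<Rightarrow> real"
  assumes e: "e > 0" and f: "C2_on (ball x e) f" and g: "C2_on (ball x e) g"
    and le: "\<forall>y\<in>ball x e. f y \<le> g y" and eq: "f x = g x" and b: "b \<in> Basis"
  shows "iter_partial [b, b] f x \<le> iter_partial [b, b] g x"
proof -
  have line: "x + t *\<^sub>R b \<in> ball x e" if "\<bar>t\<bar> < e" for t
    using that b by (simp add: dist_norm)
  have x: "x \<in> ball x e" using e by simp
  have first: "((\<lambda>s. h (x + s *\<^sub>R b)) has_real_derivative iter_partial [b] h (x + t *\<^sub>R b)) (at t)"
    if "C2_on (ball x e) h" "\<bar>t\<bar> < e" for h t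
    using has_real_derivative_along_line[OF C2_on_differentiable[OF that(1) line[OF that(2)]]] .
  have second: "((\<lambda>s. iter_partial [b] h (x + s *\<^sub>R b)) has_real_derivative iter_partial [b, b] h x) (at 0)"
    if "C2_on (ball x e) h" for h
    using has_real_derivative_along_line[OF C2_on_partial_differentiable[OF that b], of x 0] x by simp
  show ?thesis
    by (rule DERIV2_le_of_touching_below[OF e first[OF f] first[OF g] second[OF f] second[OF g]])
      (use le line eq in auto)
qed

lemma laplacian_le_of_touching_below:
  fixes f g :: "'a::euclidean_space \<Rightarrow> real"
  assumes "e > 0" "C2_on (ball x e) f" "C2_on (ball x e) g"
    "\<forall>y\<in>ball x e. f y \<le> g y" "f x = g x"
  shows "laplacian f x \<le> laplacian g x"
  unfolding laplacian_def by (rule sum_mono) (rule second_partial_le_of_touching_below[OF assms])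

section \<open>Viscosity supersolutions\<close>

lemma open_obtain_small_ball:
  assumes "open S" "x \<in> S" "e > 0"
  obtains d where "d > 0" "d \<le> e" "ball x d \<subseteq> S"
proof -
  obtain d where "d > 0" "ball x d \<subseteq> S"
    using assms(1,2) open_contains_ball by blast
  with assms(3) show ?thesis
    by (intro that[of "min d e"]) auto
qed

lemma visc_lap_le_openI:
  assumes S: "open S"
    and test: "\<And>x \<phi> e. x \<in> S \<Longrightarrow> e > 0 \<Longrightarrow> ball x e \<subseteq> S \<Longrightarrow> C2_on (ball x e) \<phi> \<Longrightarrow>
      \<phi> x = v x \<Longrightarrow> \<forall>y\<in>ball x e. \<phi> y \<le> v y \<Longrightarrow> laplacian \<phi> x \<le> \<mu>"
  shows "visc_lap_le S \<mu> v"
  unfolding visc_lap_le_def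
proof (intro ballI allI impI)
  fix x \<phi> e
  assume x: "x \<in> S" and e: "e > 0" and \<phi>: "C2_on (ball x e) \<phi>" and touch: "\<phi> x = v x"
    and below: "\<forall>y\<in>ball x e. \<phi> y \<le> v y"
  obtain d where d: "d > 0" "d \<le> e" "ball x d \<subseteq> S"
    using open_obtain_small_ball[OF S x e] .
  show "laplacian \<phi> x \<le> \<mu>"
    using test[OF x d(1,3) C2_on_subset[OF \<phi> subset_ball[OF d(2)]] touch] below subset_ball[OF d(2)]
    by blast
qed

lemma visc_lap_le_C2:
  assumes S: "open S" and f: "C2_on S f" and lap: "\<forall>x\<in>S. laplacian f x \<le> \<mu>"
  shows "visc_lap_le S \<mu> f"
proof (rule visc_lap_le_openI[OF S])
  fix x \<phi> e
  assume "x \<in> S" "e > 0" "ball x e \<subseteq> S" "C2_on (ball x e) \<phi>" "\<phi> x = f x" "\<forall>y\<in>ball x e. \<phi> y \<le> f y"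
  then have "laplacian \<phi> x \<le> laplacian f x"
    using C2_on_subset[OF f] by (intro laplacian_le_of_touching_below) auto
  with lap \<open>x \<in> S\<close> show "laplacian \<phi> x \<le> \<mu>" by force
qed

lemma visc_lap_le_const: "\<mu> \<ge> 0 \<Longrightarrow> visc_lap_le S \<mu> (\<lambda>x. K)"
  using visc_lap_le_C2[OF open_UNIV C2_on_const, of K \<mu>]
  unfolding visc_lap_le_def laplacian_const by (metis UNIV_I)

text \<open>A test function touching the minimum from below touches whichever of \<open>f\<close>, \<open>g\<close> attains
  the minimum at the touching point.\<close>

lemma visc_lap_le_min_glue:
  assumes T: "open T" "T \<subseteq> S" and f: "visc_lap_le S \<mu> f" and g: "visc_lap_le T \<mu> g"
  shows "visc_lap_le S \<mu> (\<lambda>y. if y \<in> T then min (f y) (g y) else f y)" (is "visc_lap_le S \<mu> ?v")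
  unfolding visc_lap_le_def
proof (intro ballI allI impI)
  fix x \<phi> e
  assume x: "x \<in> S" and e: "e > 0" and \<phi>: "C2_on (ball x e) \<phi>" and touch: "\<phi> x = ?v x"
    and below: "\<forall>y\<in>ball x e. \<phi> y \<le> ?v y"
  show "laplacian \<phi> x \<le> \<mu>"
  proof (cases "?v x = f x")
    case True
    have "\<forall>y\<in>ball x e. \<phi> y \<le> f y"
      using below by (auto simp: min_le_iff_disj split: if_splits intro: order.trans)
    with f x e \<phi> touch True show ?thesis
      unfolding visc_lap_le_def by metis
  next
    case False
    then have xT: "x \<in> T" and gx: "?v x = g x"
      by (auto simp: min_def split: if_splits)
    obtain d where d: "d > 0" "d \<le> e" "ball x d \<subseteq> T"
      using open_obtain_small_ball[OF T(1) xT e] .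
    have "\<forall>y\<in>ball x d. \<phi> y \<le> g y"
      using below d(3) subset_ball[OF d(2)] by (fastforce simp: min_le_iff_disj)
    with g xT d C2_on_subset[OF \<phi> subset_ball[OF d(2)]] touch gx show ?thesis
      unfolding visc_lap_le_def by metis
  qed
qed

lemma visc_lap_le_diff_C2:
  assumes U: "open U" and u: "visc_lap_le U \<mu> u" and f: "C2_on U f"
    and lap: "\<forall>x\<in>U. - laplacian f x \<le> M"
  shows "visc_lap_le U (\<mu> + M) (\<lambda>x. u x - f x)"
proof (rule visc_lap_le_openI[OF U])
  fix x \<phi> e
  assume x: "x \<in> U" and e: "e > 0" "ball x e \<subseteq> U" and \<phi>: "C2_on (ball x e) \<phi>"
    and touch: "\<phi> x = u x - f x" and below: "\<forall>y\<in>ball x e. \<phi> y \<le> u y - f y"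
  have fe: "C2_on (ball x e) f"
    using C2_on_subset[OF f e(2)] .
  have "laplacian (\<lambda>y. \<phi> y + f y) x \<le> \<mu>"
    using u x e(1) C2_on_add[OF open_ball \<phi> fe] touch below
    unfolding visc_lap_le_def by (simp add: algebra_simps)
  moreover have "laplacian (\<lambda>y. \<phi> y + f y) x = laplacian \<phi> x + laplacian f x"
    using laplacian_add[OF open_ball \<phi> fe] e(1) by simp
  ultimately show "laplacian \<phi> x \<le> \<mu> + M"
    using lap x by force
qed

lemma visc_lap_le_rescale:
  assumes w: "visc_lap_le U \<mu> w" and k: "k > 0" and \<epsilon>: "\<epsilon> > 0"
  shows "visc_lap_le {y. \<epsilon> *\<^sub>R y \<in> U} (\<mu> * \<epsilon>\<^sup>2 / k) (\<lambda>y. w (\<epsilon> *\<^sub>R y) / k)"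
  unfolding visc_lap_le_def
proof (intro ballI allI impI)
  fix y \<phi> e
  assume y: "y \<in> {y. \<epsilon> *\<^sub>R y \<in> U}" and e: "e > 0" and \<phi>: "C2_on (ball y e) \<phi>"
    and touch: "\<phi> y = w (\<epsilon> *\<^sub>R y) / k" and below: "\<forall>z\<in>ball y e. \<phi> z \<le> w (\<epsilon> *\<^sub>R z) / k"
  define \<Phi> where "\<Phi> x = k * \<phi> ((1 / \<epsilon>) *\<^sub>R x + 0)" for x
  have ball: "{x. (1 / \<epsilon>) *\<^sub>R x + 0 \<in> ball y e} = ball (\<epsilon> *\<^sub>R y) (\<epsilon> * e)"
  proof -
    have "dist (\<epsilon> *\<^sub>R y) x = \<epsilon> * dist y ((1 / \<epsilon>) *\<^sub>R x)" for x
    proof -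
      have "\<epsilon> *\<^sub>R y - x = \<epsilon> *\<^sub>R (y - (1 / \<epsilon>) *\<^sub>R x)"
        using \<epsilon> by (simp add: scaleR_diff_right)
      then show ?thesis
        using \<epsilon> by (simp add: dist_norm)
    qed
    then show ?thesis
      using \<epsilon> by auto
  qed
  have C2: "C2_on (ball (\<epsilon> *\<^sub>R y) (\<epsilon> * e)) \<Phi>"
    unfolding \<Phi>_def[abs_def] ball[symmetric] by (rule C2_on_affine_comp[OF open_ball \<phi>])
  have "\<Phi> x \<le> w x" if "x \<in> ball (\<epsilon> *\<^sub>R y) (\<epsilon> * e)" for x
  proof -
    have "\<phi> ((1 / \<epsilon>) *\<^sub>R x) \<le> w x / k"
      using below that \<epsilon> unfolding ball[symmetric] by force
    then show ?thesis
      using k unfolding \<Phi>_def by (simp add: pos_le_divide_eq mult.commute)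
  qed
  moreover have "\<Phi> (\<epsilon> *\<^sub>R y) = w (\<epsilon> *\<^sub>R y)"
    using touch k \<epsilon> unfolding \<Phi>_def by simp
  ultimately have "laplacian \<Phi> (\<epsilon> *\<^sub>R y) \<le> \<mu>"
    using w[unfolded visc_lap_le_def, rule_format, of "\<epsilon> *\<^sub>R y" "\<epsilon> * e" \<Phi>] y \<epsilon> e C2 by simp
  moreover have "laplacian \<Phi> (\<epsilon> *\<^sub>R y) = k * (1 / \<epsilon>)\<^sup>2 * laplacian \<phi> y"
    using laplacian_affine_comp[OF open_ball \<phi>, of "1 / \<epsilon>" "\<epsilon> *\<^sub>R y" 0 k] e \<epsilon>
    unfolding \<Phi>_def[abs_def] by simp
  ultimately show "laplacian \<phi> y \<le> \<mu> * \<epsilon>\<^sup>2 / k"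
    using k \<epsilon> by (simp add: field_simps power2_eq_square)
qed

section \<open>The least supersolution above an obstacle\<close>

lemma continuous_on_min_glue:
  fixes f g :: "'a::t2_space \<Rightarrow> real"
  assumes A: "open A" and f: "continuous_on S f" and g: "continuous_on A g"
    and boundary: "\<forall>x\<in>S - A. eventually (\<lambda>y. y \<in> A \<longrightarrow> f y \<le> g y) (nhds x)"
  shows "continuous_on S (\<lambda>y. if y \<in> A then min (f y) (g y) else f y)" (is "continuous_on S ?v")
proof (rule continuous_on_eq_continuous_within[THEN iffD2, rule_format])
  fix x assume x: "x \<in> S"
  have fx: "continuous (at x within S) f"
    using f x continuous_on_eq_continuous_within by blast
  show "continuous (at x within S) ?v"
  proof (cases "x \<in> A")
    case True
    have "isCont g x"
      using g A True continuous_on_eq_continuous_at by blast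
    then have "continuous (at x within S) (\<lambda>y. min (f y) (g y))"
      using continuous_min[OF fx continuous_at_imp_continuous_at_within] by blast
    moreover have "eventually (\<lambda>y. ?v y = min (f y) (g y)) (at x within S)"
      using eventually_nhds_in_open[OF A True] unfolding eventually_at_filter
      by (rule eventually_mono) simp
    ultimately show ?thesis
      using continuous_at_within_cong[of ?v x "\<lambda>y. min (f y) (g y)"] True by simp
  next
    case False
    have "eventually (\<lambda>y. y \<in> A \<longrightarrow> f y \<le> g y) (nhds x)"
      using boundary x False by blast
    then have "eventually (\<lambda>y. ?v y = f y) (at x within S)"
      unfolding eventually_at_filter by (rule eventually_mono) simp
    with fx False show ?thesis
      using continuous_at_within_cong[of ?v x f] by simp
  qed
qed

lemma obst_admissible_min_glue:
  fixes U :: "'a::euclidean_space set"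
  assumes U: "open U" and u: "obst_admissible U obst u"
    and A: "open A" "A \<subseteq> U" and \<phi>: "C2_on A \<phi>" and lap: "\<forall>y\<in>A. laplacian \<phi> y \<le> 0"
    and above_obst: "\<forall>y\<in>A. obst y \<le> \<phi> y"
    and boundary: "\<forall>x\<in>closure U - A. eventually (\<lambda>y. y \<in> A \<longrightarrow> u y \<le> \<phi> y) (nhds x)"
  shows "obst_admissible U obst (\<lambda>y. if y \<in> A then min (u y) (\<phi> y) else u y)"
proof -
  have "continuous_on (closure U) u" "visc_lap_le U 0 u" "\<forall>x\<in>U. obst x \<le> u x"
    "\<forall>x\<in>frontier U. 0 \<le> u x"
    using u unfolding obst_admissible_def by auto
  moreover have "x \<notin> A" if "x \<in> frontier U" for x
    using that A(2) U by (auto simp: frontier_def interior_open)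
  ultimately show ?thesis
    unfolding obst_admissible_def
    using continuous_on_min_glue[OF A(1) _ C2_on_imp_continuous_on[OF \<phi>] boundary]
      visc_lap_le_min_glue[OF A _ visc_lap_le_C2[OF A(1) \<phi> lap]] above_obst
    by auto
qed

text \<open>The paraboloid is chosen small enough to keep \<open>\<phi>\<close> superharmonic and above the obstacle, yet
  large enough to lift \<open>\<phi>\<close> above \<open>u\<close> near the sphere, where \<open>min u \<phi>\<close> must be glued to \<open>u\<close>.\<close>

lemma obst_admissible_paraboloid_cut:
  fixes U :: "'a::euclidean_space set"
  assumes U: "open U" and u: "obst_admissible U obst u"
    and \<rho>: "\<rho> > 0" "ball x0 \<rho> \<subseteq> U" and m: "m > 0" and gap: "\<forall>y\<in>ball x0 \<rho>. obst y + m < u y"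
    and \<Phi>: "C2_on U \<Phi>" and \<kappa>: "\<kappa> > 0" and lap: "\<forall>y\<in>U. laplacian \<Phi> y \<le> - \<kappa>"
    and above: "\<forall>y\<in>ball x0 \<rho>. u y \<le> \<Phi> y" and touch: "\<Phi> x0 = u x0"
  obtains v where "obst_admissible U obst v" "v x0 < u x0"
proof -
  define n where "n = real DIM('a)"
  define c where "c = min (\<kappa> / (2 * n)) (m / \<rho>\<^sup>2) / 2"
  have c: "c > 0" "2 * c * n \<le> \<kappa> / 2" "c * \<rho>\<^sup>2 \<le> m / 2"
    using \<kappa> m \<rho> unfolding c_def n_def by (auto simp: field_simps min_def)
  define \<delta> where "\<delta> = c * \<rho>\<^sup>2 / 4"
  have \<delta>: "\<delta> > 0" "\<delta> < m"
    using c m \<rho> unfolding \<delta>_def by auto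
  define \<phi> where "\<phi> y = \<Phi> y + (c * ((y - x0) \<bullet> (y - x0)) + - \<delta>)" for y
  have \<phi>C2: "C2_on U \<phi>"
    unfolding \<phi>_def[abs_def] by (rule C2_on_add[OF U \<Phi> C2_on_quadratic])
  have \<phi>lap: "laplacian \<phi> y \<le> 0" if "y \<in> U" for y
    using laplacian_add[OF U \<Phi> C2_on_quadratic[of U c x0 "- \<delta>"] that] lap that c(2) \<kappa>
    unfolding \<phi>_def[abs_def] laplacian_quadratic n_def by fastforce
  have \<phi>u: "u y + c * (dist y x0)\<^sup>2 - \<delta> \<le> \<phi> y" if "y \<in> ball x0 \<rho>" for y
    using above that unfolding \<phi>_def by (force simp: dist_norm power2_norm_eq_inner)
  define v where "v y = (if y \<in> ball x0 \<rho> then min (u y) (\<phi> y) else u y)" for y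
  have "obst_admissible U obst v"
    unfolding v_def[abs_def]
  proof (rule obst_admissible_min_glue[OF U u open_ball \<rho>(2)])
    show "C2_on (ball x0 \<rho>) \<phi>" "\<forall>y\<in>ball x0 \<rho>. laplacian \<phi> y \<le> 0"
      using C2_on_subset[OF \<phi>C2 \<rho>(2)] \<phi>lap \<rho>(2) by auto
    show "\<forall>y\<in>ball x0 \<rho>. obst y \<le> \<phi> y"
      using gap \<phi>u \<delta> c(1) by (smt (verit) zero_le_power2 mult_nonneg_nonneg)
    show "\<forall>x\<in>closure U - ball x0 \<rho>. eventually (\<lambda>y. y \<in> ball x0 \<rho> \<longrightarrow> u y \<le> \<phi> y) (nhds x)"
    proof
      fix x assume "x \<in> closure U - ball x0 \<rho>"
      then have "x \<in> - cball x0 (\<rho> / 2)" using \<rho> by auto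
      moreover have "u y \<le> \<phi> y" if "y \<in> ball x0 \<rho>" "y \<in> - cball x0 (\<rho> / 2)" for y
      proof -
        have "(\<rho> / 2)\<^sup>2 \<le> (dist y x0)\<^sup>2" using that \<rho> by (intro power_mono) (auto simp: dist_commute)
        then have "\<delta> \<le> c * (dist y x0)\<^sup>2" using c(1) unfolding \<delta>_def by (simp add: power_divide)
        then show ?thesis using \<phi>u[OF that(1)] by simp
      qed
      ultimately show "eventually (\<lambda>y. y \<in> ball x0 \<rho> \<longrightarrow> u y \<le> \<phi> y) (nhds x)"
        unfolding eventually_nhds by (intro exI[of _ "- cball x0 (\<rho> / 2)"]) auto
    qed
  qed
  moreover have "v x0 < u x0"
    using \<rho> touch \<delta> unfolding v_def \<phi>_def by simp
  ultimately show ?thesis by (rule that)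
qed

lemma least_obst_sol_not_touched_above:
  fixes U :: "'a::euclidean_space set"
  assumes U: "open U" and u: "is_least_obst_sol U obst u" and obst: "continuous_on U obst"
    and x0: "x0 \<in> U" "obst x0 < u x0"
    and \<Phi>: "C2_on U \<Phi>" and \<kappa>: "\<kappa> > 0" and lap: "\<forall>y\<in>U. laplacian \<Phi> y \<le> - \<kappa>"
    and r: "r > 0" "ball x0 r \<subseteq> U" and above: "\<forall>y\<in>ball x0 r. u y \<le> \<Phi> y" and touch: "\<Phi> x0 = u x0"
  shows False
proof -
  have adm: "obst_admissible U obst u"
    and least: "\<And>v. obst_admissible U obst v \<Longrightarrow> u x0 \<le> v x0"
    using u x0(1) closure_subset unfolding is_least_obst_sol_def by auto
  have "continuous_on U u"
    using adm continuous_on_subset[OF _ closure_subset] unfolding obst_admissible_def by blast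
  then have "isCont (\<lambda>y. u y - obst y) x0"
    using continuous_on_diff[OF _ obst] U x0(1) continuous_on_eq_continuous_at by blast
  define m where "m = (u x0 - obst x0) / 2"
  have m: "m > 0" using x0 unfolding m_def by simp
  have "eventually (\<lambda>y. y \<noteq> x0 \<longrightarrow> m < u y - obst y) (nhds x0)"
    using order_tendstoD(1)[OF \<open>isCont _ x0\<close>[unfolded isCont_def], of m] m
    unfolding m_def eventually_at_filter by simp
  then have "eventually (\<lambda>y. m < u y - obst y) (nhds x0)"
    by (rule eventually_mono) (use m in \<open>auto simp: m_def\<close>)
  then obtain \<rho>0 where \<rho>0: "\<rho>0 > 0" "\<And>y. dist y x0 < \<rho>0 \<Longrightarrow> m < u y - obst y"
    unfolding eventually_nhds_metric by blast
  define \<rho> where "\<rho> = min \<rho>0 r"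
  have \<rho>: "\<rho> > 0" "ball x0 \<rho> \<subseteq> ball x0 r" "\<forall>y\<in>ball x0 \<rho>. obst y + m < u y"
    using \<rho>0 r unfolding \<rho>_def by (auto simp: dist_commute add.commute less_diff_eq)
  obtain v where "obst_admissible U obst v" "v x0 < u x0"
    by (rule obst_admissible_paraboloid_cut[OF U adm \<rho>(1) _ m \<rho>(3) \<Phi> \<kappa> lap])
      (use \<rho>(2) r(2) above touch in auto)
  with least show False by fastforce
qed

lemma le_Sup_ball_on_cball:
  fixes w :: "'a::euclidean_space \<Rightarrow> real"
  assumes w: "continuous_on (cball z r) w" and r: "r > 0" and x: "x \<in> cball z r"
  shows "w x \<le> Sup (w ` ball z r)"
proof (rule continuous_le_on_closure[of "ball z r" w x])
  have "bounded (w ` cball z r)"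
    by (rule compact_imp_bounded[OF compact_continuous_image[OF w compact_cball]])
  then have "bdd_above (w ` ball z r)"
    by (meson ball_subset_cball bdd_above_mono bounded_imp_bdd_above image_mono)
  then show "\<And>y. y \<in> ball z r \<Longrightarrow> w y \<le> Sup (w ` ball z r)"
    by (simp add: cSup_upper)
qed (use w r x in auto)

lemma obtain_factor_below_keeping_ineqs:
  fixes L s t A B :: real
  assumes L: "L > 0" and s: "A < L * s" and t: "P \<Longrightarrow> B < L * t"
  obtains a where "0 < a" "a < L" "A < a * s" "P \<Longrightarrow> B < a * t"
proof -
  have "eventually (\<lambda>a. a \<in> {0<..<L} \<and> A < a * s \<and> (P \<longrightarrow> B < a * t)) (at_left L)"
  proof (intro eventually_conj)
    show "eventually (\<lambda>a. a \<in> {0<..<L}) (at_left L)"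
      using eventually_at_left_real[OF L] .
    show "eventually (\<lambda>a. A < a * s) (at_left L)"
      by (rule order_tendstoD(1)[OF _ s]) (auto intro!: tendsto_eq_intros)
    show "eventually (\<lambda>a. P \<longrightarrow> B < a * t) (at_left L)"
    proof (cases P)
      case True
      have "eventually (\<lambda>a. B < a * t) (at_left L)"
        by (rule order_tendstoD(1)[OF _ t[OF True]]) (auto intro!: tendsto_eq_intros)
      then show ?thesis by (rule eventually_mono) simp
    qed simp
  qed
  then show ?thesis
    using eventually_happens'[OF trivial_limit_at_left_real] that by auto
qed

lemma least_obst_sol_no_free_penalized_max:
  fixes U :: "'a::euclidean_space set"
  assumes U: "open U" and u: "is_least_obst_sol U obst u" and obst: "continuous_on U obst"
    and \<phi>0: "C2_on U \<phi>0" and lap: "\<forall>y\<in>U. laplacian \<phi>0 y \<le> - lam"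
    and a: "a < lam / (2 * real DIM('a))" and cball: "cball z r \<subseteq> U"
    and x0: "x0 \<in> ball z r" "obst x0 < u x0"
    and max: "\<And>y. y \<in> cball z r \<Longrightarrow>
      u y - \<phi>0 y - a * ((y - z) \<bullet> (y - z)) \<le> u x0 - \<phi>0 x0 - a * ((x0 - z) \<bullet> (x0 - z))"
  shows False
proof -
  define n where "n = real DIM('a)"
  define \<Phi> where "\<Phi> y = \<phi>0 y + (a * ((y - z) \<bullet> (y - z)) + (u x0 - \<phi>0 x0 - a * ((x0 - z) \<bullet> (x0 - z))))" for y
  have "laplacian \<Phi> y = laplacian \<phi>0 y + 2 * a * n" if "y \<in> U" for y
    using laplacian_add[OF U \<phi>0 C2_on_quadratic that]
    unfolding \<Phi>_def[abs_def] laplacian_quadratic n_def .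
  then have \<Phi>lap: "\<forall>y\<in>U. laplacian \<Phi> y \<le> - (lam - 2 * a * n)"
    using lap by force
  have ball: "ball x0 (r - dist z x0) \<subseteq> cball z r"
    by (auto simp: subset_iff) (metis dist_triangle add.commute less_diff_eq order_le_less_trans order.strict_implies_order)
  show False
  proof (rule least_obst_sol_not_touched_above[OF U u obst _ x0(2) _ _ \<Phi>lap])
    show "x0 \<in> U" using x0(1) cball by auto
    show "C2_on U \<Phi>"
      unfolding \<Phi>_def[abs_def] by (rule C2_on_add[OF U \<phi>0 C2_on_quadratic])
    show "0 < lam - 2 * a * n"
      using a unfolding n_def by (simp add: field_simps)
    show "0 < r - dist z x0" "ball x0 (r - dist z x0) \<subseteq> U"
      using x0(1) ball cball by auto
    show "\<forall>y\<in>ball x0 (r - dist z x0). u y \<le> \<Phi> y"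
      using max ball unfolding \<Phi>_def by fastforce
    show "\<Phi> x0 = u x0"
      unfolding \<Phi>_def by simp
  qed
qed

lemma penalized_diff_le_at_contact:
  assumes x: "x \<in> {x\<in>U. u x = obst x}" and obst_le: "\<forall>x\<in>U. obst x \<le> \<phi>0 x" and a: "a \<ge> 0"
  shows "u x - \<phi>0 x - a * ((x - z) \<bullet> (x - z)) \<le> - (a * (infdist z {x\<in>U. u x = obst x})\<^sup>2)"
proof -
  have "(infdist z {x\<in>U. u x = obst x})\<^sup>2 \<le> (x - z) \<bullet> (x - z)"
    using power_mono[OF infdist_le[OF x, of z] infdist_nonneg, of 2]
    by (simp add: dist_norm norm_minus_commute flip: power2_norm_eq_inner)
  with a have "a * (infdist z {x\<in>U. u x = obst x})\<^sup>2 \<le> a * ((x - z) \<bullet> (x - z))"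
    by (rule mult_left_mono[rotated])
  with x obst_le show ?thesis
    by force
qed

lemma least_obst_sol_Sup_ball_ge:
  fixes U :: "'a::euclidean_space set"
  assumes U: "open U" and u: "is_least_obst_sol U obst u" and obst: "continuous_on U obst"
    and \<phi>0: "C2_on U \<phi>0" and lap: "\<forall>y\<in>U. laplacian \<phi>0 y \<le> - lam"
    and obst_le: "\<forall>x\<in>U. obst x \<le> \<phi>0 x" and lower: "\<forall>x\<in>U. - R \<le> u x - \<phi>0 x"
    and far: "{x\<in>U. u x = obst x} = {} \<or>
      R < lam / (2 * real DIM('a)) * (infdist z {x\<in>U. u x = obst x})\<^sup>2"
    and lam: "lam > 0" and r: "r > 0" "cball z r \<subseteq> U"
  shows "lam / (2 * real DIM('a)) * r\<^sup>2 - R \<le> Sup ((\<lambda>x. u x - \<phi>0 x) ` ball z r)"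
proof (rule ccontr)
  define L where "L = lam / (2 * real DIM('a))"
  define w where "w x = u x - \<phi>0 x" for x
  define S where "S = Sup (w ` ball z r)"
  define \<Lambda> where "\<Lambda> = {x\<in>U. u x = obst x}"
  define D where "D = infdist z \<Lambda>"
  assume "\<not> ?thesis"
  then have SL: "S + R < L * r\<^sup>2"
    unfolding S_def w_def[abs_def] L_def by simp
  have adm: "obst_admissible U obst u"
    using u unfolding is_least_obst_sol_def by blast
  have "continuous_on (cball z r) u"
    using adm continuous_on_subset[OF _ order.trans[OF r(2) closure_subset]]
    unfolding obst_admissible_def by blast
  then have wc: "continuous_on (cball z r) w"
    unfolding w_def[abs_def]
    using continuous_on_subset[OF C2_on_imp_continuous_on[OF \<phi>0] r(2)] by (rule continuous_on_diff)
  obtain a where a: "0 < a" "a < L" "S + R < a * r\<^sup>2" "\<Lambda> \<noteq> {} \<Longrightarrow> R < a * D\<^sup>2"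
    by (rule obtain_factor_below_keeping_ineqs[of L "S + R" "r\<^sup>2" "\<Lambda> \<noteq> {}" R "D\<^sup>2"])
      (use lam SL far in \<open>auto simp: L_def \<Lambda>_def D_def\<close>)
  define F where "F x = w x - a * ((x - z) \<bullet> (x - z))" for x
  have Fc: "continuous_on (cball z r) F"
    unfolding F_def[abs_def] by (intro continuous_intros wc)
  obtain x0 where x0: "x0 \<in> cball z r" and max: "\<And>y. y \<in> cball z r \<Longrightarrow> F y \<le> F x0"
    using continuous_attains_sup[OF compact_cball _ Fc] r(1) by auto
  have "z \<in> U" using r by auto
  then have Fx0: "- R \<le> F x0"
    using max[of z] lower r(1) unfolding F_def w_def by fastforce
  have x0_ball: "x0 \<in> ball z r"
  proof (rule ccontr)
    assume "x0 \<notin> ball z r"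
    then have "(x0 - z) \<bullet> (x0 - z) = r\<^sup>2"
      using x0 by (simp add: dist_norm norm_minus_commute flip: power2_norm_eq_inner)
    then have "F x0 \<le> S - a * r\<^sup>2"
      using le_Sup_ball_on_cball[OF wc r(1) x0] unfolding F_def S_def by simp
    with a(3) Fx0 show False by simp
  qed
  have x0U: "x0 \<in> U" using x0 r(2) by blast
  have "obst x0 < u x0"
  proof (rule ccontr)
    assume "\<not> obst x0 < u x0"
    then have "x0 \<in> \<Lambda>"
      using adm x0U unfolding \<Lambda>_def obst_admissible_def by force
    then have "F x0 \<le> - (a * D\<^sup>2)"
      using penalized_diff_le_at_contact[of x0 U u obst \<phi>0 a z] obst_le a(1)
      unfolding F_def w_def \<Lambda>_def D_def by simp
    with a(4) \<open>x0 \<in> \<Lambda>\<close> Fx0 show False by force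
  qed
  with max show False
    by (intro least_obst_sol_no_free_penalized_max[OF U u obst \<phi>0 lap _ r(2) x0_ball])
      (use a(2) in \<open>auto simp: F_def w_def L_def\<close>)
qed

section \<open>Periodisation over the integer lattice\<close>

definition lattice_points :: "'a::euclidean_space set" where
  "lattice_points = {k. \<forall>b\<in>Basis. k \<bullet> b \<in> \<int>}"

lemma lattice_periodic_iff: "lattice_periodic v \<longleftrightarrow> (\<forall>x. \<forall>k\<in>lattice_points. v (x + k) = v x)"
  unfolding lattice_periodic_def lattice_points_def by blast

lemma zero_in_lattice_points: "0 \<in> lattice_points"
  unfolding lattice_points_def by simp

lemma translation_lattice_points:
  assumes "k \<in> lattice_points"
  shows "(+) k ` lattice_points = lattice_points"
proof -
  have "k + j \<in> lattice_points" "j - k \<in> lattice_points" if "j \<in> lattice_points" for j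
    using assms that unfolding lattice_points_def by (auto simp: inner_add_left inner_diff_left)
  then show ?thesis
    by (auto simp: image_iff) (metis add.commute diff_add_cancel)
qed

lemma finite_lattice_points_norm_le: "finite {k::'a::euclidean_space. k \<in> lattice_points \<and> norm k \<le> R}"
proof -
  define N where "N = \<lceil>R\<rceil>"
  define F where "F f = (\<Sum>b\<in>(Basis::'a set). of_int (f b) *\<^sub>R b)" for f
  have "{k::'a. k \<in> lattice_points \<and> norm k \<le> R} \<subseteq> F ` (Basis \<rightarrow>\<^sub>E {-N..N})"
  proof
    fix k :: 'a assume k: "k \<in> {k. k \<in> lattice_points \<and> norm k \<le> R}"
    define f where "f = restrict (\<lambda>b. \<lfloor>k \<bullet> b\<rfloor>) Basis"
    have fb: "of_int (f b) = k \<bullet> b" if "b \<in> Basis" for b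
      using k that unfolding f_def lattice_points_def by (auto elim!: Ints_cases)
    have "f b \<in> {-N..N}" if "b \<in> Basis" for b
    proof -
      have "\<bar>f b\<bar> \<le> N"
        using Basis_le_norm[OF that, of k] k fb[OF that] unfolding N_def by simp linarith
      then show ?thesis by (simp add: abs_le_iff)
    qed
    then have "f \<in> Basis \<rightarrow>\<^sub>E {-N..N}"
      unfolding f_def by auto
    moreover have "F f = k"
      unfolding F_def by (simp add: fb euclidean_representation cong: sum.cong)
    ultimately show "k \<in> F ` (Basis \<rightarrow>\<^sub>E {-N..N})" by blast
  qed
  then show ?thesis
    by (rule finite_subset) (intro finite_imageI finite_PiE, auto)
qed

definition lattice_inf :: "('a::euclidean_space \<Rightarrow> real) \<Rightarrow> 'a \<Rightarrow> real" where
  "lattice_inf V y = Inf ((\<lambda>k. V (y + k)) ` lattice_points)"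

lemma lattice_inf_le: "bdd_below (range V) \<Longrightarrow> k \<in> lattice_points \<Longrightarrow> lattice_inf V y \<le> V (y + k)"
  unfolding lattice_inf_def by (rule cInf_lower) (auto intro: bdd_below_mono)

lemma lattice_inf_ge: "(\<And>k. k \<in> lattice_points \<Longrightarrow> c \<le> V (y + k)) \<Longrightarrow> c \<le> lattice_inf V y"
  unfolding lattice_inf_def by (rule cInf_greatest) (use zero_in_lattice_points in auto)

lemma lattice_periodic_lattice_inf: "lattice_periodic (lattice_inf V)"
  unfolding lattice_periodic_iff lattice_inf_def
proof (intro allI ballI)
  fix x k :: 'a assume "k \<in> lattice_points"
  then have "(\<lambda>j. V (x + k + j)) ` lattice_points = (\<lambda>j. V (x + j)) ` ((+) k ` lattice_points)"
    by (simp add: image_image add.assoc)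
  with translation_lattice_points[OF \<open>k \<in> lattice_points\<close>]
  show "Inf ((\<lambda>j. V (x + k + j)) ` lattice_points) = Inf ((\<lambda>j. V (x + j)) ` lattice_points)"
    by simp
qed

text \<open>If \<open>V\<close> differs from a periodic majorant \<open>\<chi>\<close> only on a bounded set, then near any point only
  finitely many translates can be smaller than \<open>V\<close> itself, so the infimum is locally a finite
  minimum.\<close>

lemma lattice_inf_eq_Min_near:
  fixes V chi :: "'a::euclidean_space \<Rightarrow> real"
  assumes bdd: "bdd_below (range V)" and B: "bounded B" and outside: "\<And>y. y \<notin> B \<Longrightarrow> V y = chi y"
    and le: "\<And>y. V y \<le> chi y" and per: "lattice_periodic chi"
  obtains K where "finite K" "K \<noteq> {}" "K \<subseteq> lattice_points"
    "\<And>y. y \<in> ball y0 1 \<Longrightarrow> lattice_inf V y = Min ((\<lambda>k. V (y + k)) ` K)"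
proof -
  obtain R where R: "\<And>x. x \<in> B \<Longrightarrow> norm x \<le> R"
    using B unfolding bounded_iff by blast
  define K where "K = {k::'a. k \<in> lattice_points \<and> norm k \<le> \<bar>R\<bar> + norm y0 + 1}"
  have K: "finite K" "0 \<in> K" "K \<subseteq> lattice_points"
    unfolding K_def using finite_lattice_points_norm_le zero_in_lattice_points by auto
  have far: "chi y \<le> V (y + k)" if "y \<in> ball y0 1" "k \<in> lattice_points" "k \<notin> K" for y k
  proof -
    have "norm y < norm y0 + 1"
      using that(1) norm_triangle_ineq[of y0 "y - y0"] by (simp add: dist_norm norm_minus_commute)
    moreover have "norm k \<le> norm (y + k) + norm y"
      using norm_triangle_ineq[of "y + k" "- y"] by simp
    ultimately have "y + k \<notin> B"
      using R[of "y + k"] that(2,3) unfolding K_def by force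
    then show ?thesis
      using outside per that(2) unfolding lattice_periodic_iff by simp
  qed
  have "lattice_inf V y = Min ((\<lambda>k. V (y + k)) ` K)" if y: "y \<in> ball y0 1" for y
  proof (rule antisym)
    have "Min ((\<lambda>k. V (y + k)) ` K) \<in> (\<lambda>k. V (y + k)) ` K"
      using K by (intro Min_in) auto
    then obtain k where "k \<in> K" "Min ((\<lambda>k. V (y + k)) ` K) = V (y + k)"
      by auto
    then show "lattice_inf V y \<le> Min ((\<lambda>k. V (y + k)) ` K)"
      using lattice_inf_le[OF bdd] K(3) by auto
    have "V (y + 0) \<in> (\<lambda>k. V (y + k)) ` K"
      using K(2) by (rule imageI)
    then have Min_le_V: "Min ((\<lambda>k. V (y + k)) ` K) \<le> V y"
      using K(1) Min_le by fastforce
    show "Min ((\<lambda>k. V (y + k)) ` K) \<le> lattice_inf V y"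
    proof (rule lattice_inf_ge)
      fix k :: 'a assume k: "k \<in> lattice_points"
      show "Min ((\<lambda>k. V (y + k)) ` K) \<le> V (y + k)"
      proof (cases "k \<in> K")
        case True
        then show ?thesis using K(1) by simp
      next
        case False
        then show ?thesis using Min_le_V le[of y] far[OF y k] by linarith
      qed
    qed
  qed
  with K show ?thesis using that by blast
qed

lemma isCont_Min_image:
  fixes f :: "'b \<Rightarrow> 'a::t2_space \<Rightarrow> real"
  assumes "finite K" "K \<noteq> {}" "\<And>k. k \<in> K \<Longrightarrow> isCont (f k) x"
  shows "isCont (\<lambda>y. Min ((\<lambda>k. f k y) ` K)) x"
  using assms
proof (induction K rule: finite_ne_induct)
  case (insert a A)
  have "(\<lambda>y. Min ((\<lambda>k. f k y) ` insert a A)) = (\<lambda>y. min (f a y) (Min ((\<lambda>k. f k y) ` A)))"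
    using insert.hyps by (auto intro!: ext simp: Min_insert)
  then show ?case using insert by (simp add: continuous_min)
qed simp

lemma visc_lap_le_lattice_inf:
  assumes V: "visc_lap_le UNIV \<mu> V" and bdd: "bdd_below (range V)"
    and attained: "\<And>y. \<exists>k\<in>lattice_points. lattice_inf V y = V (y + k)"
  shows "visc_lap_le UNIV \<mu> (lattice_inf V)"
  unfolding visc_lap_le_def
proof (intro ballI allI impI)
  fix y \<phi> e
  assume e: "e > 0" and \<phi>: "C2_on (ball y e) \<phi>" and touch: "\<phi> y = lattice_inf V y"
    and below: "\<forall>x\<in>ball y e. \<phi> x \<le> lattice_inf V x"
  obtain k where k: "k \<in> lattice_points" "lattice_inf V y = V (y + k)"
    using attained by blast
  have "\<forall>x\<in>ball (y + k) e. \<phi> (x - k) \<le> V x"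
  proof
    fix x assume "x \<in> ball (y + k) e"
    then have "\<phi> (x - k) \<le> lattice_inf V (x - k)"
      using below by (auto simp: dist_norm algebra_simps)
    also have "\<dots> \<le> V x"
      using lattice_inf_le[OF bdd k(1), of "x - k"] by simp
    finally show "\<phi> (x - k) \<le> V x" .
  qed
  then have "laplacian (\<lambda>x. \<phi> (x - k)) (y + k) \<le> \<mu>"
    using V e C2_on_ball_translate[OF \<phi>] touch k(2) unfolding visc_lap_le_def by simp
  then show "laplacian \<phi> y \<le> \<mu>"
    using laplacian_ball_translate[OF \<phi> e] by simp
qed

lemma cell_admissible_lattice_inf:
  fixes V chi \<psi> :: "'a::euclidean_space \<Rightarrow> real"
  assumes bdd: "bdd_below (range V)" and B: "bounded B" and outside: "\<And>y. y \<notin> B \<Longrightarrow> V y = chi y"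
    and le: "\<And>y. V y \<le> chi y" and chi: "lattice_periodic chi"
    and cont: "\<And>y. isCont V y" and visc: "visc_lap_le UNIV \<mu> V"
    and \<psi>: "lattice_periodic \<psi>" "\<And>y. \<psi> y \<le> V y"
  shows "cell_admissible \<mu> \<psi> (lattice_inf V)"
proof -
  note Min_near = lattice_inf_eq_Min_near[OF bdd B outside le chi]
  have "isCont (lattice_inf V) y0" for y0
  proof -
    obtain K where K: "finite K" "K \<noteq> {}" "K \<subseteq> lattice_points"
      "\<And>y. y \<in> ball y0 1 \<Longrightarrow> lattice_inf V y = Min ((\<lambda>k. V (y + k)) ` K)"
      using Min_near by blast
    have "isCont (\<lambda>y. Min ((\<lambda>k. V (y + k)) ` K)) y0"
      using K(1,2) by (rule isCont_Min_image) (auto intro: isCont_o2[OF _ cont] continuous_intros)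
    moreover have "eventually (\<lambda>y. lattice_inf V y = Min ((\<lambda>k. V (y + k)) ` K)) (nhds y0)"
      using eventually_nhds_in_open[OF open_ball, of y0 y0 1] K(4) by (auto elim: eventually_mono)
    ultimately show ?thesis
      using isCont_cong[of "lattice_inf V" "\<lambda>y. Min ((\<lambda>k. V (y + k)) ` K)" y0] by simp
  qed
  moreover have "\<exists>k\<in>lattice_points. lattice_inf V y = V (y + k)" for y
  proof -
    obtain K where K: "finite K" "K \<noteq> {}" "K \<subseteq> lattice_points"
      "\<And>x. x \<in> ball y 1 \<Longrightarrow> lattice_inf V x = Min ((\<lambda>k. V (x + k)) ` K)"
      using Min_near by blast
    then show ?thesis
      using Min_in[of "(\<lambda>k. V (y + k)) ` K"] by fastforce
  qed
  moreover have "\<psi> y \<le> lattice_inf V y" for y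
    using \<psi> by (intro lattice_inf_ge) (metis lattice_periodic_iff)
  ultimately show ?thesis
    unfolding cell_admissible_def
    using visc_lap_le_lattice_inf[OF visc bdd] lattice_periodic_lattice_inf
    by (auto intro: continuous_at_imp_continuous_on)
qed

section \<open>Comparison with the cell problem\<close>

lemma open_scaleR_preimage:
  fixes U :: "'a::real_normed_vector set"
  shows "open U \<Longrightarrow> open {y. \<epsilon> *\<^sub>R y \<in> U}"
  using continuous_open_vimage[of U "\<lambda>y. \<epsilon> *\<^sub>R y"] unfolding vimage_def by simp

lemma bounded_scaleR_preimage:
  fixes U :: "'a::real_normed_vector set"
  assumes "bounded U" "\<epsilon> \<noteq> 0"
  shows "bounded {y. \<epsilon> *\<^sub>R y \<in> U}"
proof -
  have "y \<in> (*\<^sub>R) (1 / \<epsilon>) ` U" if "\<epsilon> *\<^sub>R y \<in> U" for y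
    by (rule image_eqI[OF _ that]) (use assms(2) in simp)
  then have "{y. \<epsilon> *\<^sub>R y \<in> U} \<subseteq> (*\<^sub>R) (1 / \<epsilon>) ` U"
    by blast
  then show ?thesis
    using bounded_scaling[OF assms(1)] bounded_subset by blast
qed

lemma eventually_nhds_pos_outside_open:
  fixes G :: "'a::metric_space \<Rightarrow> real"
  assumes U: "open U" and G: "continuous_on (closure U) G" and pos: "\<forall>x\<in>frontier U. 0 < G x"
    and x: "x \<notin> U"
  shows "eventually (\<lambda>y. y \<in> U \<longrightarrow> 0 < G y) (nhds x)"
proof (cases "x \<in> closure U")
  case True
  then have "0 < G x"
    using pos x U by (simp add: frontier_def interior_open)
  moreover have "(G \<longlongrightarrow> G x) (at x within closure U)"
    using G True continuous_on_def by blast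
  ultimately have "eventually (\<lambda>y. 0 < G y) (at x within closure U)"
    by (simp add: order_tendstoD(1))
  then show ?thesis
    unfolding eventually_at_filter
    by (rule eventually_mono) (use closure_subset x in auto)
next
  case False
  then have "eventually (\<lambda>y. y \<in> - closure U) (nhds x)"
    by (intro eventually_nhds_in_open) auto
  then show ?thesis
    by (rule eventually_mono) (use closure_subset in auto)
qed

lemma visc_lap_le_rescaled_min_glue:
  assumes U: "open U" and u: "visc_lap_le U 0 u" and \<phi>0: "C2_on U \<phi>0"
    and lap: "\<forall>x\<in>U. - laplacian \<phi>0 x \<le> M" and chi: "visc_lap_le UNIV (M * \<epsilon>\<^sup>2 / k) chi"
    and k: "k > 0" and \<epsilon>: "\<epsilon> > 0"
  shows "visc_lap_le UNIV (M * \<epsilon>\<^sup>2 / k)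
    (\<lambda>y. if \<epsilon> *\<^sub>R y \<in> U then min (chi y) ((u (\<epsilon> *\<^sub>R y) - \<phi>0 (\<epsilon> *\<^sub>R y)) / k) else chi y)"
proof -
  have "visc_lap_le {y. \<epsilon> *\<^sub>R y \<in> U} ((0 + M) * \<epsilon>\<^sup>2 / k) (\<lambda>y. (u (\<epsilon> *\<^sub>R y) - \<phi>0 (\<epsilon> *\<^sub>R y)) / k)"
    by (rule visc_lap_le_rescale[OF visc_lap_le_diff_C2[OF U u \<phi>0 lap] k \<epsilon>])
  with visc_lap_le_min_glue[OF open_scaleR_preimage[OF U] subset_UNIV chi] show ?thesis
    by simp
qed

lemma continuous_on_rescaled_min_glue:
  fixes G :: "'a::euclidean_space \<Rightarrow> real"
  assumes U: "open U" and G: "continuous_on (closure U) G" and pos: "\<forall>x\<in>frontier U. 0 < G x"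
    and chi: "continuous_on UNIV chi" "\<forall>y. chi y \<le> 0" and k: "k > 0"
  shows "continuous_on UNIV (\<lambda>y. if \<epsilon> *\<^sub>R y \<in> U then min (chi y) (G (\<epsilon> *\<^sub>R y) / k) else chi y)"
proof -
  let ?A = "{y. \<epsilon> *\<^sub>R y \<in> U}"
  have "continuous_on ?A (\<lambda>y. G (\<epsilon> *\<^sub>R y))"
    by (rule continuous_on_compose2[OF continuous_on_subset[OF G closure_subset]])
      (auto intro!: continuous_intros)
  then have "continuous_on ?A (\<lambda>y. G (\<epsilon> *\<^sub>R y) / k)"
    using k by (intro continuous_on_divide continuous_on_const) auto
  moreover have "eventually (\<lambda>y. y \<in> ?A \<longrightarrow> chi y \<le> G (\<epsilon> *\<^sub>R y) / k) (nhds y)" if "y \<notin> ?A" for y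
  proof -
    have "filterlim (\<lambda>y. \<epsilon> *\<^sub>R y) (nhds (\<epsilon> *\<^sub>R y)) (nhds y)"
      by (intro tendsto_intros filterlim_ident)
    with eventually_nhds_pos_outside_open[OF U G pos] that
    have "eventually (\<lambda>y. \<epsilon> *\<^sub>R y \<in> U \<longrightarrow> 0 < G (\<epsilon> *\<^sub>R y)) (nhds y)"
      using eventually_compose_filterlim by force
    then show ?thesis
    proof (rule eventually_mono)
      fix y assume "\<epsilon> *\<^sub>R y \<in> U \<longrightarrow> 0 < G (\<epsilon> *\<^sub>R y)"
      with k chi(2) show "y \<in> ?A \<longrightarrow> chi y \<le> G (\<epsilon> *\<^sub>R y) / k"
        by (metis divide_pos_pos less_imp_le mem_Collect_eq order.trans)
    qed
  qed
  ultimately show ?thesis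
    using continuous_on_min_glue[OF open_scaleR_preimage[OF U] chi(1)] by simp
qed

lemma least_obst_sol_ge_rescaled_cell_sol:
  fixes U :: "'a::euclidean_space set" and \<phi>0 \<psi> u chi :: "'a \<Rightarrow> real"
  assumes U: "open U" "bounded U"
    and u: "is_least_obst_sol U (\<lambda>x. \<phi>0 x + k * \<psi> ((1 / \<epsilon>) *\<^sub>R x)) u"
    and k: "k > 0" and \<epsilon>: "\<epsilon> > 0"
    and \<phi>0: "C2_on U \<phi>0" "continuous_on (closure U) \<phi>0" "\<forall>x\<in>frontier U. \<phi>0 x < 0"
    and lap: "\<forall>x\<in>U. - laplacian \<phi>0 x \<le> M"
    and chi: "is_least_cell_sol (M * \<epsilon>\<^sup>2 / k) \<psi> chi" and chi_nonpos: "\<forall>y. chi y \<le> 0"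
    and \<psi>: "lattice_periodic \<psi>" "bdd_below (range \<psi>)"
    and x: "x \<in> U"
  shows "k * chi ((1 / \<epsilon>) *\<^sub>R x) \<le> u x - \<phi>0 x"
proof -
  define W where "W y = (u (\<epsilon> *\<^sub>R y) - \<phi>0 (\<epsilon> *\<^sub>R y)) / k" for y
  define V where "V y = (if \<epsilon> *\<^sub>R y \<in> U then min (chi y) (W y) else chi y)" for y
  have u_adm: "continuous_on (closure U) u" "visc_lap_le U 0 u"
    "\<forall>x\<in>U. \<phi>0 x + k * \<psi> ((1 / \<epsilon>) *\<^sub>R x) \<le> u x" "\<forall>x\<in>frontier U. 0 \<le> u x"
    using u unfolding is_least_obst_sol_def obst_admissible_def by auto
  have chi_adm: "continuous_on UNIV chi" "lattice_periodic chi" "visc_lap_le UNIV (M * \<epsilon>\<^sup>2 / k) chi"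
    and chi_least: "\<And>v. cell_admissible (M * \<epsilon>\<^sup>2 / k) \<psi> v \<Longrightarrow> chi y \<le> v y" for y
    using chi unfolding is_least_cell_sol_def cell_admissible_def by auto
  have \<psi>V: "\<psi> y \<le> V y" for y
  proof -
    have "\<psi> y \<le> W y" if "\<epsilon> *\<^sub>R y \<in> U"
      using u_adm(3) that k \<epsilon> unfolding W_def by (force simp: pos_le_divide_eq mult.commute)
    then show ?thesis
      using chi unfolding V_def is_least_cell_sol_def cell_admissible_def by auto
  qed
  obtain c where "\<And>y. c \<le> \<psi> y"
    using \<psi>(2) unfolding bdd_below_def by auto
  then have bdd: "bdd_below (range V)"
    using \<psi>V by (intro bdd_belowI2) (rule order.trans)
  have "cell_admissible (M * \<epsilon>\<^sup>2 / k) \<psi> (lattice_inf V)"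
  proof (rule cell_admissible_lattice_inf[OF bdd bounded_scaleR_preimage[OF U(2), of \<epsilon>] _ _ chi_adm(2) _ _ \<psi>(1) \<psi>V])
    show "isCont V y" for y
      using continuous_on_rescaled_min_glue[OF U(1) continuous_on_diff[OF u_adm(1) \<phi>0(2)] _ chi_adm(1)
          chi_nonpos k] u_adm(4) \<phi>0(3)
      unfolding V_def[abs_def] W_def by (force simp: continuous_on_eq_continuous_at)
    show "visc_lap_le UNIV (M * \<epsilon>\<^sup>2 / k) V"
      unfolding V_def[abs_def] W_def
      by (rule visc_lap_le_rescaled_min_glue[OF U(1) u_adm(2) \<phi>0(1) lap chi_adm(3) k \<epsilon>])
  qed (use \<epsilon> in \<open>auto simp: V_def\<close>)
  then have "chi ((1 / \<epsilon>) *\<^sub>R x) \<le> lattice_inf V ((1 / \<epsilon>) *\<^sub>R x)"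
    by (rule chi_least)
  also have "\<dots> \<le> V ((1 / \<epsilon>) *\<^sub>R x)"
    using lattice_inf_le[OF bdd zero_in_lattice_points] by simp
  also have "\<dots> \<le> (u x - \<phi>0 x) / k"
    using x \<epsilon> unfolding V_def W_def by simp
  finally show ?thesis
    using k by (simp add: pos_le_divide_eq mult.commute)
qed

lemma least_cell_sol_nonpos:
  assumes "is_least_cell_sol \<mu> \<psi> chi" "\<mu> \<ge> 0" "\<forall>x. \<psi> x \<le> 0"
  shows "chi y \<le> 0"
proof -
  have "cell_admissible \<mu> \<psi> (\<lambda>x. 0)"
    using assms(2,3) visc_lap_le_const unfolding cell_admissible_def lattice_periodic_def by auto
  with assms(1) show ?thesis
    unfolding is_least_cell_sol_def by blast
qed

lemma least_cell_sol_Inf_le: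
  assumes "is_least_cell_sol \<mu> \<psi> chi" "\<forall>x. -1 \<le> \<psi> x"
  shows "Inf (range chi) \<le> chi y"
proof -
  have "bdd_below (range chi)"
    using assms unfolding is_least_cell_sol_def cell_admissible_def
    by (intro bdd_belowI2[of _ "-1"]) (meson order.trans)
  then show ?thesis
    by (rule cInf_lower[OF rangeI])
qed

lemma least_cell_sol_Inf_nonpos:
  assumes "is_least_cell_sol \<mu> \<psi> chi" "\<mu> \<ge> 0" "\<forall>x. -1 \<le> \<psi> x \<and> \<psi> x \<le> 0"
  shows "Inf (range chi) \<le> 0"
  using least_cell_sol_Inf_le[OF assms(1), of 0] least_cell_sol_nonpos[OF assms(1,2), of 0] assms(3)
  by (meson order.trans)

lemma smooth_imp_continuous_on: "smooth f \<Longrightarrow> continuous_on S f"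
  unfolding smooth_def
  by (metis continuous_at_imp_continuous_on differentiable_imp_continuous_within
      empty_subsetI iter_partial.simps(1) set_empty)

lemma less_div_of_sqrt_mult_less:
  fixes c R D :: real
  assumes "sqrt c * sqrt R < D" "c > 0" "R \<ge> 0"
  shows "R < D\<^sup>2 / c"
proof -
  have "(sqrt c * sqrt R)\<^sup>2 < D\<^sup>2"
    using assms by (intro power_strict_mono) auto
  with assms(2,3) show ?thesis
    by (simp add: power_mult_distrib pos_less_divide_eq mult.commute)
qed

lemma least_obst_sol_Sup_ball_ge_cell_inf:
  fixes U :: "'a::euclidean_space set" and \<phi>0 \<psi> u chi :: "'a \<Rightarrow> real"
  assumes U: "open U" "bounded U"
    and \<phi>0: "C2_on U \<phi>0" "continuous_on (closure U) \<phi>0" "\<forall>x\<in>frontier U. \<phi>0 x < 0"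
    and lap: "\<forall>x\<in>U. lam \<le> - laplacian \<phi>0 x \<and> - laplacian \<phi>0 x \<le> M" and lam: "lam > 0"
    and \<psi>: "continuous_on UNIV \<psi>" "lattice_periodic \<psi>" "\<forall>x. -1 \<le> \<psi> x \<and> \<psi> x \<le> 0"
    and k: "k > 0" and \<epsilon>: "\<epsilon> > 0"
    and u: "is_least_obst_sol U (\<lambda>x. \<phi>0 x + k * \<psi> ((1 / \<epsilon>) *\<^sub>R x)) u"
    and chi: "is_least_cell_sol (M * \<epsilon>\<^sup>2 / k) \<psi> chi"
    and far: "{x\<in>U. u x = \<phi>0 x + k * \<psi> ((1 / \<epsilon>) *\<^sub>R x)} = {} \<or>
      k * (- Inf (range chi)) < lam / (2 * real DIM('a)) *
        (infdist z {x\<in>U. u x = \<phi>0 x + k * \<psi> ((1 / \<epsilon>) *\<^sub>R x)})\<^sup>2"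
    and r: "r > 0" "cball z r \<subseteq> U"
  shows "lam / (2 * real DIM('a)) * r\<^sup>2 - k * (- Inf (range chi)) \<le> Sup ((\<lambda>x. u x - \<phi>0 x) ` ball z r)"
proof (rule least_obst_sol_Sup_ball_ge[OF U(1) u _ \<phi>0(1) _ _ _ far lam r])
  have "z \<in> U" using r by auto
  then have "M * \<epsilon>\<^sup>2 / k \<ge> 0"
    using lap lam k by force
  note Inf = least_cell_sol_Inf_le[OF chi] \<psi>(3)
  have chi_nonpos: "\<forall>y. chi y \<le> 0"
    using least_cell_sol_nonpos[OF chi \<open>M * \<epsilon>\<^sup>2 / k \<ge> 0\<close>] \<psi>(3) by simp
  have \<psi>_bdd: "bdd_below (range \<psi>)"
    using \<psi>(3) by (intro bdd_belowI2[of _ "-1"]) blast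
  show "\<forall>x\<in>U. - (k * (- Inf (range chi))) \<le> u x - \<phi>0 x"
  proof
    fix x assume "x \<in> U"
    have "- (k * (- Inf (range chi))) \<le> k * chi ((1 / \<epsilon>) *\<^sub>R x)"
      using Inf k by simp
    also have "\<dots> \<le> u x - \<phi>0 x"
      using least_obst_sol_ge_rescaled_cell_sol[OF U u k \<epsilon> \<phi>0 _ chi chi_nonpos \<psi>(2) \<psi>_bdd \<open>x \<in> U\<close>] lap
      by blast
    finally show "- (k * (- Inf (range chi))) \<le> u x - \<phi>0 x" .
  qed
  have "continuous_on U (\<lambda>x. \<psi> ((1 / \<epsilon>) *\<^sub>R x))"
    by (rule continuous_on_compose2[OF \<psi>(1)]) (auto intro!: continuous_intros)
  then show "continuous_on U (\<lambda>x. \<phi>0 x + k * \<psi> ((1 / \<epsilon>) *\<^sub>R x))"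
    using C2_on_imp_continuous_on[OF \<phi>0(1)] by (intro continuous_on_add continuous_on_mult_left)
  show "\<forall>y\<in>U. laplacian \<phi>0 y \<le> - lam"
    using lap by force
  show "\<forall>x\<in>U. \<phi>0 x + k * \<psi> ((1 / \<epsilon>) *\<^sub>R x) \<le> \<phi>0 x"
    using \<psi>(3) k by (simp add: mult_nonneg_nonpos)
qed

theorem lemma3p3:
  fixes U :: "'a::euclidean_space set"
    and \<phi>0 \<psi> u chi :: "'a \<Rightarrow> real"
    and lam p \<epsilon> r :: real
    and z :: 'a
  assumes U: "smooth_bounded_domain U"
    and phi0_C2: "C2_on U \<phi>0"
    and phi0_cont: "continuous_on (closure U) \<phi>0"
    and phi0_pos: "\<exists>x\<in>U. \<phi>0 x > 0"
    and phi0_neg: "\<forall>x\<in>frontier U. \<phi>0 x < 0"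
    and lam: "0 < lam" "lam \<le> 1"
    and phi0_lap: "\<forall>x\<in>U. lam \<le> - laplacian \<phi>0 x \<and> - laplacian \<phi>0 x \<le> 1 / lam"
    and psi_smooth: "smooth \<psi>"
    and psi_per: "lattice_periodic \<psi>"
    and psi_bnd: "\<forall>x. -1 \<le> \<psi> x \<and> \<psi> x \<le> 0"
    and eps: "\<epsilon> > 0"
    and u: "is_least_obst_sol U (\<lambda>x. \<phi>0 x + \<epsilon> powr p * \<psi> ((1 / \<epsilon>) *\<^sub>R x)) u"
    and chi: "is_least_cell_sol ((1 / lam) * \<epsilon> powr (2 - p)) \<psi> chi"
    and z: "z \<in> U"
    and dist: "let \<Lambda> = {x\<in>U. u x = \<phi>0 x + \<epsilon> powr p * \<psi> ((1 / \<epsilon>) *\<^sub>R x)};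
                   rr = sqrt (\<epsilon> powr p * (- Inf (range chi)))
               in \<Lambda> = {} \<or> infdist z \<Lambda> > sqrt (2 * real DIM('a) / lam) * rr"
    and r: "r > 0" "cball z r \<subseteq> U"
  shows "Sup ((\<lambda>x. u x - \<phi>0 x) ` ball z r)
           \<ge> lam / (2 * real DIM('a)) * r\<^sup>2 - (sqrt (\<epsilon> powr p * (- Inf (range chi))))\<^sup>2"
proof -
  define k where "k = \<epsilon> powr p"
  define R where "R = k * (- Inf (range chi))"
  have k: "k > 0" using eps unfolding k_def by simp
  have chi': "is_least_cell_sol (1 / lam * \<epsilon>\<^sup>2 / k) \<psi> chi"
    using chi eps unfolding k_def by (simp add: powr_diff powr_numeral)
  have R: "R \<ge> 0"
    using least_cell_sol_Inf_nonpos[OF chi _ psi_bnd] lam k unfolding R_def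
    by (simp add: mult_nonneg_nonpos)
  have "R < lam / (2 * real DIM('a)) * D\<^sup>2" if "sqrt (2 * real DIM('a) / lam) * sqrt R < D" for D
    using less_div_of_sqrt_mult_less[OF that] lam R by (simp add: field_simps)
  then have "lam / (2 * real DIM('a)) * r\<^sup>2 - R \<le> Sup ((\<lambda>x. u x - \<phi>0 x) ` ball z r)"
    using least_obst_sol_Sup_ball_ge_cell_inf[OF _ _ phi0_C2 phi0_cont phi0_neg phi0_lap lam(1)
        smooth_imp_continuous_on[OF psi_smooth] psi_per psi_bnd k eps u[folded k_def] chi' _ r]
      U dist unfolding smooth_bounded_domain_def Let_def R_def k_def by auto
  with R show ?thesis
    unfolding R_def k_def by simp
qed

end
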